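(* Let $n\ge 2$ and let $G$ be a subgroup of $\mathrm{Sp}(n,1)$ containing $I_{n-2}\oplus c_1$, $I_{n-2}\oplus c_2$ and $I_{n-2}\oplus c_3$, where $c_1=\mathrm{diag}(1,i,-i)$, $c_2=\mathrm{diag}(i,1,-i)$, $c_3=\mathrm{diag}(i,-i,1)$. Then for every $g\in\mathrm{Sp}(n,1)$, the set of traces of the elements of $gGg^{-1}$ is not contained in $\mathbb R$.
   Context: $\mathbb H$ denotes the quaternions, with units $i,j,k$. $\mathrm{Sp}(n,1)=\{A\in\mathrm{GL}(n+1,\mathbb H): A^*I_{n,1}A=I_{n,1}\}$ with $A^*$ the conjugate transpose and $I_{n,1}=\mathrm{diag}(1,\dots,1,-1)$. $I_{n-2}\oplus c$ denotes the block diagonal matrix with the $(n-2)\times(n-2)$ identity in the upper left block and the $3\times 3$ matrix $c$ in the lower right block. The trace of a quaternionic matrix is the sum of its diagonal entries. *)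

theory Defs
  imports "HOL-Analysis.Analysis" "HOL-Algebra.Group"
begin

datatype quat = Quat (qRe: real) (qI: real) (qJ: real) (qK: real)

lemma quat_eqI: "qRe x = qRe y \<Longrightarrow> qI x = qI y \<Longrightarrow> qJ x = qJ y \<Longrightarrow> qK x = qK y \<Longrightarrow> x = y"
  by (cases x; cases y) simp

instantiation quat :: ring_1
begin
definition "0 = Quat 0 0 0 0"
definition "1 = Quat 1 0 0 0"
definition "x + y = Quat (qRe x + qRe y) (qI x + qI y) (qJ x + qJ y) (qK x + qK y)"
definition "x - y = Quat (qRe x - qRe y) (qI x - qI y) (qJ x - qJ y) (qK x - qK y)"
definition "- x = Quat (- qRe x) (- qI x) (- qJ x) (- qK x)"
definition "x * y = Quat
   (qRe x * qRe y - qI x * qI y - qJ x * qJ y - qK x * qK y)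
   (qRe x * qI y + qI x * qRe y + qJ x * qK y - qK x * qJ y)
   (qRe x * qJ y - qI x * qK y + qJ x * qRe y + qK x * qI y)
   (qRe x * qK y + qI x * qJ y - qJ x * qI y + qK x * qRe y)"
instance
  by standard (auto intro!: quat_eqI simp: zero_quat_def one_quat_def plus_quat_def
      minus_quat_def uminus_quat_def times_quat_def algebra_simps)
end

definition qi :: quat where "qi = Quat 0 1 0 0"
definition qj :: quat where "qj = Quat 0 0 1 0"
definition qk :: quat where "qk = Quat 0 0 0 1"
definition qcnj :: "quat \<Rightarrow> quat" where "qcnj x = Quat (qRe x) (- qI x) (- qJ x) (- qK x)"
definition quat_of_real :: "real \<Rightarrow> quat" where "quat_of_real r = Quat r 0 0 0"

section \<open>Quaternionic matrices of size N (indices 0..N-1), as functions vanishing outside\<close>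

type_synonym qmat = "nat \<Rightarrow> nat \<Rightarrow> quat"

definition qmats :: "nat \<Rightarrow> qmat set" where
  "qmats N = {A. \<forall>i j. (N \<le> i \<or> N \<le> j) \<longrightarrow> A i j = 0}"

definition mmul :: "nat \<Rightarrow> qmat \<Rightarrow> qmat \<Rightarrow> qmat" where
  "mmul N A B = (\<lambda>i j. if i < N \<and> j < N then (\<Sum>k<N. A i k * B k j) else 0)"

definition mId :: "nat \<Rightarrow> qmat" where
  "mId N = (\<lambda>i j. if i < N \<and> i = j then 1 else 0)"

definition mstar :: "qmat \<Rightarrow> qmat" where
  "mstar A = (\<lambda>i j. qcnj (A j i))"

definition qtrace :: "nat \<Rightarrow> qmat \<Rightarrow> quat" where
  "qtrace N A = (\<Sum>i<N. A i i)"

definition GLq :: "nat \<Rightarrow> qmat set" where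
  "GLq N = {A \<in> qmats N. \<exists>B \<in> qmats N. mmul N A B = mId N \<and> mmul N B A = mId N}"

definition Inl :: "nat \<Rightarrow> qmat" where
  "Inl n = (\<lambda>i j. if i = j \<and> i < n then 1 else if i = n \<and> j = n then -1 else 0)"

definition Sp :: "nat \<Rightarrow> qmat set" where
  "Sp n = {A \<in> GLq (n+1). mmul (n+1) (mmul (n+1) (mstar A) (Inl n)) A = Inl n}"

definition Sp_group :: "nat \<Rightarrow> qmat monoid" where
  "Sp_group n = \<lparr>carrier = Sp n, mult = mmul (n+1), one = mId (n+1)\<rparr>"

text \<open>3x3 diagonal matrix and block matrix I_{n-2} (+) c of size n+1\<close>
definition diag3 :: "quat \<Rightarrow> quat \<Rightarrow> quat \<Rightarrow> qmat" where
  "diag3 a b c = (\<lambda>i j. if i = j then (if i = 0 then a else if i = 1 then b else if i = 2 then c else 0) else 0)"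

definition blk :: "nat \<Rightarrow> qmat \<Rightarrow> qmat" where
  "blk n c = (\<lambda>i j. if i < n - 2 \<and> j < n - 2 then (if i = j then 1 else 0)
      else if n - 2 \<le> i \<and> i \<le> n \<and> n - 2 \<le> j \<and> j \<le> n then c (i - (n - 2)) (j - (n - 2))
      else 0)"

end

theory Submission
  imports Defs
begin

text \<open>
  Write \<open>J = I_{n,1}\<close>, so that \<open>g^{-1} = J g^* J\<close>, and let \<open>c\<close> be the last column of \<open>g\<close>.
  In \<open>G\<close> the combination \<open>1 + c_1 c_2 - c_1 - c_2\<close> of diagonal matrices is \<open>diag(0,\<dots>,0,2i)\<close>,
  so if all traces of \<open>gGg^{-1}\<close> were real, so would be the trace of \<open>g diag(0,\<dots>,0,2i) g^{-1}\<close>,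
  which is \<open>2(c_n i c_n^* - \<Sum>_{k<n} c_k i c_k^*)\<close>. The imaginary part of \<open>q i q^*\<close> is a vector
  of \<open>\<real>^3\<close> of length \<open>|q|^2\<close>, so the triangle inequality would give \<open>|c_n|^2 \<le> \<Sum>_{k<n} |c_k|^2\<close>,
  contradicting \<open>\<Sum>_{k<n} |c_k|^2 - |c_n|^2 = -1\<close>, the last diagonal entry of \<open>g^* J g = J\<close>.
\<close>

lemma qcnj_0 [simp]: "qcnj 0 = 0"
  by (simp add: qcnj_def zero_quat_def)

lemma qcnj_1 [simp]: "qcnj 1 = 1"
  by (simp add: qcnj_def one_quat_def)

lemma qcnj_add: "qcnj (x + y) = qcnj x + qcnj y"
  by (simp add: qcnj_def plus_quat_def)

lemma qcnj_mult: "qcnj (x * y) = qcnj y * qcnj x"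
  by (simp add: qcnj_def times_quat_def)

lemma qcnj_sum: "qcnj (sum f A) = (\<Sum>x\<in>A. qcnj (f x))"
  by (induction A rule: infinite_finite_induct) (simp_all add: qcnj_add)

lemma qi_mult_qi: "qi * qi = -1"
  by (simp add: qi_def times_quat_def one_quat_def uminus_quat_def)

definition qnorm2 :: "quat \<Rightarrow> real" where
  "qnorm2 q = qRe q ^ 2 + qI q ^ 2 + qJ q ^ 2 + qK q ^ 2"

definition qim :: "quat \<Rightarrow> real \<times> real \<times> real" where
  "qim q = (qI q, qJ q, qK q)"

lemma qRe_diff: "qRe (x - y) = qRe x - qRe y"
  by (simp add: minus_quat_def)

lemma qRe_sum: "qRe (sum f A) = (\<Sum>x\<in>A. qRe (f x))"
  by (induction A rule: infinite_finite_induct) (simp_all add: zero_quat_def plus_quat_def)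

lemma qRe_qcnj_mult_self: "qRe (qcnj q * q) = qnorm2 q"
  by (simp add: qcnj_def times_quat_def qnorm2_def power2_eq_square)

lemma qim_add: "qim (x + y) = qim x + qim y"
  by (simp add: qim_def plus_quat_def)

lemma qim_diff: "qim (x - y) = qim x - qim y"
  by (simp add: qim_def minus_quat_def)

lemma qim_0: "qim 0 = 0"
  by (simp add: qim_def zero_quat_def zero_prod_def)

lemma qim_sum: "qim (sum f A) = (\<Sum>x\<in>A. qim (f x))"
  by (induction A rule: infinite_finite_induct) (simp_all add: qim_0 qim_add)

lemma qim_quat_of_real: "qim (quat_of_real r) = 0"
  by (simp add: qim_def quat_of_real_def zero_prod_def)

lemma norm_qim_conj_qi: "norm (qim (c * qi * qcnj c)) = qnorm2 c"
proof -
  let ?w = "c * qi * qcnj c"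
  have "qI ?w ^ 2 + qJ ?w ^ 2 + qK ?w ^ 2 = qnorm2 c ^ 2"
    by (simp add: qi_def qcnj_def times_quat_def qnorm2_def) algebra
  then have "norm (qim ?w) = sqrt (qnorm2 c ^ 2)"
    by (simp add: qim_def norm_prod_def add.assoc)
  then show ?thesis
    by (simp add: qnorm2_def)
qed

lemma qim_conj_qi_ne_sum:
  assumes "(\<Sum>i<n. qnorm2 (c i)) - qnorm2 (c n) = -1"
  shows "qim (c n * qi * qcnj (c n)) \<noteq> (\<Sum>i<n. qim (c i * qi * qcnj (c i)))"
proof
  assume eq: "qim (c n * qi * qcnj (c n)) = (\<Sum>i<n. qim (c i * qi * qcnj (c i)))"
  have "qnorm2 (c n) = norm (\<Sum>i<n. qim (c i * qi * qcnj (c i)))"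
    by (simp flip: eq add: norm_qim_conj_qi)
  also have "\<dots> \<le> (\<Sum>i<n. norm (qim (c i * qi * qcnj (c i))))"
    by (rule norm_sum)
  also have "\<dots> = (\<Sum>i<n. qnorm2 (c i))"
    by (simp add: norm_qim_conj_qi)
  finally show False
    using assms by simp
qed

definition mdiag :: "(nat \<Rightarrow> quat) \<Rightarrow> qmat" where
  "mdiag d = (\<lambda>i j. if i = j then d i else 0)"

lemma mmul_qmats: "mmul N A B \<in> qmats N"
  by (simp add: qmats_def mmul_def)

lemma mmul_assoc: "mmul N (mmul N A B) C = mmul N A (mmul N B C)"
proof (intro ext)
  fix i j
  show "mmul N (mmul N A B) C i j = mmul N A (mmul N B C) i j"
  proof (cases "i < N \<and> j < N")
    case True
    have "mmul N (mmul N A B) C i j = (\<Sum>k<N. \<Sum>m<N. A i m * B m k * C k j)"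
      using True by (simp add: mmul_def sum_distrib_right)
    also have "\<dots> = (\<Sum>m<N. \<Sum>k<N. A i m * B m k * C k j)"
      by (rule sum.swap)
    also have "\<dots> = mmul N A (mmul N B C) i j"
      using True by (simp add: mmul_def sum_distrib_left mult.assoc)
    finally show ?thesis .
  qed (auto simp: mmul_def)
qed

lemma mmul_mdiag_right: "mmul N A (mdiag d) = (\<lambda>i j. if i < N \<and> j < N then A i j * d j else 0)"
  by (intro ext) (simp add: mmul_def mdiag_def if_distrib[of "(*) _"] sum.delta' cong: if_cong)

lemma mmul_mdiag_left: "mmul N (mdiag d) A = (\<lambda>i j. if i < N \<and> j < N then d i * A i j else 0)"
  by (intro ext) (simp add: mmul_def mdiag_def if_distrib[of "\<lambda>x. x * _"] sum.delta cong: if_cong)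

lemma mId_eq_mdiag: "mId N = mdiag (\<lambda>i. if i < N then 1 else 0)"
  by (auto simp: mId_def mdiag_def)

lemma mmul_mId_left: "A \<in> qmats N \<Longrightarrow> mmul N (mId N) A = A"
  unfolding mId_eq_mdiag mmul_mdiag_left qmats_def by (intro ext) (auto simp: not_less)

lemma mmul_mId_right: "A \<in> qmats N \<Longrightarrow> mmul N A (mId N) = A"
  unfolding mId_eq_mdiag mmul_mdiag_right qmats_def by (intro ext) (auto simp: not_less)

lemma mId_qmats: "mId N \<in> qmats N"
  by (simp add: qmats_def mId_def)

lemma mstar_mmul: "mstar (mmul N A B) = mmul N (mstar B) (mstar A)"
  by (intro ext) (auto simp: mstar_def mmul_def qcnj_sum qcnj_mult)

lemma mstar_mId: "mstar (mId N) = mId N"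
  by (intro ext) (auto simp: mstar_def mId_def)

lemma Inl_eq_mdiag: "Inl n = mdiag (\<lambda>i. if i < n then 1 else if i = n then -1 else 0)"
  by (intro ext) (auto simp: Inl_def mdiag_def)

lemma Inl_qmats: "Inl n \<in> qmats (n+1)"
  by (simp add: qmats_def Inl_def)

lemma Inl_mmul_Inl: "mmul (n+1) (Inl n) (Inl n) = mId (n+1)"
  unfolding Inl_eq_mdiag mmul_mdiag_right by (intro ext) (auto simp: mdiag_def mId_def)

lemma qtrace_mmul_mdiag:
  "qtrace N (mmul N (mmul N A (mdiag d)) B) = (\<Sum>k<N. \<Sum>i<N. A i k * d k * B k i)"
  unfolding qtrace_def mmul_mdiag_right by (simp add: mmul_def) (rule sum.swap)

definition blk_diag :: "nat \<Rightarrow> quat \<Rightarrow> quat \<Rightarrow> quat \<Rightarrow> nat \<Rightarrow> quat" where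
  "blk_diag n a b c i =
    (if i < n - 2 then 1 else if i = n - 2 then a else if i = n - 1 then b else if i = n then c else 0)"

lemma blk_diag3_eq_mdiag:
  assumes "2 \<le> n"
  shows "blk n (diag3 a b c) = mdiag (blk_diag n a b c)"
proof (intro ext)
  fix i j
  consider "i < n - 2" | "i = n - 2" | "i = n - 1" | "i = n" | "n < i" by arith
  then show "blk n (diag3 a b c) i j = mdiag (blk_diag n a b c) i j"
    by cases (use assms in \<open>auto simp: blk_def diag3_def mdiag_def blk_diag_def\<close>)
qed

lemma mmul_blk_diag3:
  assumes "2 \<le> n"
  shows "mmul (n+1) (blk n (diag3 a b c)) (blk n (diag3 a' b' c'))
    = blk n (diag3 (a * a') (b * b') (c * c'))"
  unfolding blk_diag3_eq_mdiag[OF assms] mmul_mdiag_right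
  by (intro ext) (auto simp: mdiag_def blk_diag_def)

lemma mId_eq_blk_diag3:
  assumes "2 \<le> n"
  shows "mId (n+1) = blk n (diag3 1 1 1)"
  unfolding blk_diag3_eq_mdiag[OF assms] mId_eq_mdiag
  by (intro ext) (auto simp: blk_diag_def mdiag_def)

lemma qtrace_conj_blk_diag3_combination:
  fixes A B :: qmat
  assumes "2 \<le> n"
  defines "T x \<equiv> qtrace (n+1) (mmul (n+1) (mmul (n+1) A x) B)"
  shows "T (blk n (diag3 1 1 1)) + T (blk n (diag3 qi qi (-1)))
      - T (blk n (diag3 1 qi (- qi))) - T (blk n (diag3 qi 1 (- qi)))
    = (\<Sum>i<n+1. A i n * (qi + qi) * B n i)"
proof -
  have diag: "blk_diag n 1 1 1 k + blk_diag n qi qi (-1) k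
      - blk_diag n 1 qi (- qi) k - blk_diag n qi 1 (- qi) k = (if k = n then qi + qi else 0)" for k
    using assms(1) by (auto simp: blk_diag_def)
  have "T (blk n (diag3 1 1 1)) + T (blk n (diag3 qi qi (-1)))
      - T (blk n (diag3 1 qi (- qi))) - T (blk n (diag3 qi 1 (- qi)))
    = (\<Sum>k<n+1. \<Sum>i<n+1. A i k * (blk_diag n 1 1 1 k + blk_diag n qi qi (-1) k
        - blk_diag n 1 qi (- qi) k - blk_diag n qi 1 (- qi) k) * B k i)"
    unfolding T_def blk_diag3_eq_mdiag[OF assms(1)] qtrace_mmul_mdiag
    by (simp only: distrib_left distrib_right left_diff_distrib right_diff_distrib
        flip: sum.distrib sum_subtractf)
  also have "\<dots> = (\<Sum>i<n+1. A i n * (qi + qi) * B n i)"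
    by (simp add: diag if_distrib[of "\<lambda>x. _ * x * _"] cong: if_cong)
  finally show ?thesis .
qed

lemma Sp_mmul_closed:
  assumes "A \<in> Sp n" "B \<in> Sp n"
  shows "mmul (n+1) A B \<in> Sp n"
proof -
  let ?N = "n+1" and ?J = "Inl n"
  obtain A' B' where A: "A \<in> qmats ?N" "A' \<in> qmats ?N" "mmul ?N A A' = mId ?N" "mmul ?N A' A = mId ?N"
      "mmul ?N (mmul ?N (mstar A) ?J) A = ?J"
    and B: "B \<in> qmats ?N" "B' \<in> qmats ?N" "mmul ?N B B' = mId ?N" "mmul ?N B' B = mId ?N"
      "mmul ?N (mmul ?N (mstar B) ?J) B = ?J"
    using assms by (auto simp: Sp_def GLq_def)
  have "mmul ?N (mmul ?N A B) (mmul ?N B' A') = mId ?N"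
    using A B by (simp add: mmul_assoc mmul_mId_left flip: mmul_assoc[of _ B B'])
  moreover have "mmul ?N (mmul ?N B' A') (mmul ?N A B) = mId ?N"
    using A B by (simp add: mmul_assoc mmul_mId_left flip: mmul_assoc[of _ A' A])
  moreover have "mmul ?N (mmul ?N (mstar (mmul ?N A B)) ?J) (mmul ?N A B)
      = mmul ?N (mmul ?N (mstar B) (mmul ?N (mmul ?N (mstar A) ?J) A)) B"
    by (simp add: mstar_mmul mmul_assoc)
  then have "mmul ?N (mmul ?N (mstar (mmul ?N A B)) ?J) (mmul ?N A B) = ?J"
    using A B by simp
  ultimately show ?thesis
    by (auto simp: Sp_def GLq_def mmul_qmats intro!: bexI[of _ "mmul ?N B' A'"])
qed

lemma mId_Sp: "mId (n+1) \<in> Sp n"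
  using mId_qmats Inl_qmats
  by (auto simp: Sp_def GLq_def mstar_mId mmul_mId_left mmul_mId_right intro!: bexI[of _ "mId (n+1)"])

lemma Sp_inverse_closed:
  assumes "A \<in> Sp n" "A' \<in> qmats (n+1)"
    and "mmul (n+1) A A' = mId (n+1)" "mmul (n+1) A' A = mId (n+1)"
  shows "A' \<in> Sp n"
proof -
  let ?N = "n+1" and ?J = "Inl n"
  have A: "A \<in> qmats ?N" "mmul ?N (mmul ?N (mstar A) ?J) A = ?J"
    using assms(1) by (auto simp: Sp_def GLq_def)
  have "mmul ?N (mmul ?N (mstar A') ?J) A'
      = mmul ?N (mmul ?N (mstar A') (mmul ?N (mmul ?N (mstar A) ?J) A)) A'"
    using A by simp
  also have "\<dots> = mmul ?N (mmul ?N (mstar (mmul ?N A A')) ?J) (mmul ?N A A')"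
    by (simp add: mstar_mmul mmul_assoc)
  also have "\<dots> = ?J"
    using assms(3) Inl_qmats by (simp add: mstar_mId mmul_mId_left mmul_mId_right)
  finally show ?thesis
    using assms A by (auto simp: Sp_def GLq_def)
qed

lemma group_Sp_group: "group (Sp_group n)"
proof (rule groupI)
  fix A assume "A \<in> carrier (Sp_group n)"
  then have A: "A \<in> Sp n" by (simp add: Sp_group_def)
  then obtain A' where A': "A' \<in> qmats (n+1)" "mmul (n+1) A A' = mId (n+1)" "mmul (n+1) A' A = mId (n+1)"
    by (auto simp: Sp_def GLq_def)
  then have "A' \<in> Sp n"
    using A by (blast intro: Sp_inverse_closed)
  with A' show "\<exists>A'\<in>carrier (Sp_group n). A' \<otimes>\<^bsub>Sp_group n\<^esub> A = \<one>\<^bsub>Sp_group n\<^esub>"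
    by (auto simp: Sp_group_def)
next
  fix A assume "A \<in> carrier (Sp_group n)"
  then have "A \<in> qmats (n+1)" by (simp add: Sp_group_def Sp_def GLq_def)
  then show "\<one>\<^bsub>Sp_group n\<^esub> \<otimes>\<^bsub>Sp_group n\<^esub> A = A"
    by (simp add: Sp_group_def mmul_mId_left)
qed (use Sp_mmul_closed mId_Sp in \<open>simp_all add: Sp_group_def mmul_assoc\<close>)

lemma Sp_group_inv:
  assumes "g \<in> Sp n"
  shows "inv\<^bsub>Sp_group n\<^esub> g = mmul (n+1) (Inl n) (mmul (n+1) (mstar g) (Inl n))"
proof -
  let ?N = "n+1" and ?J = "Inl n"
  interpret Sp: group "Sp_group n" by (rule group_Sp_group)
  define h where "h = inv\<^bsub>Sp_group n\<^esub> g"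
  define y where "y = mmul ?N ?J (mmul ?N (mstar g) ?J)"
  have h: "h \<in> qmats ?N" "mmul ?N g h = mId ?N"
    using assms Sp.inv_closed[of g] Sp.r_inv[of g] by (auto simp: h_def Sp_group_def Sp_def GLq_def)
  have "mmul ?N y g = mmul ?N ?J (mmul ?N (mmul ?N (mstar g) ?J) g)"
    by (simp add: y_def mmul_assoc)
  also have "\<dots> = mId ?N"
    using assms Inl_mmul_Inl[of n] by (simp add: Sp_def)
  finally have yg: "mmul ?N y g = mId ?N" .
  have "y = mmul ?N y (mmul ?N g h)"
    using h mmul_mId_right[OF mmul_qmats] by (simp add: y_def)
  also have "\<dots> = mmul ?N (mmul ?N y g) h"
    by (rule mmul_assoc[symmetric])
  also have "\<dots> = h"
    using yg h mmul_mId_left by simp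
  finally show ?thesis by (simp add: h_def y_def)
qed

lemma Sp_group_inv_last_row:
  assumes "g \<in> Sp n" "i \<le> n"
  shows "(inv\<^bsub>Sp_group n\<^esub> g) n i = (if i < n then - qcnj (g i n) else qcnj (g n n))"
  using assms(2)
  by (simp add: Sp_group_inv[OF assms(1)] Inl_eq_mdiag mmul_mdiag_left mmul_mdiag_right mstar_def)

lemma Sp_last_column:
  assumes "g \<in> Sp n"
  shows "(\<Sum>i<n. qnorm2 (g i n)) - qnorm2 (g n n) = -1"
proof -
  have "mmul (n+1) (mmul (n+1) (mstar g) (Inl n)) g n n = Inl n n n"
    using assms by (simp add: Sp_def)
  then have "(\<Sum>k<n+1. qcnj (g k n) * (if k < n then 1 else if k = n then -1 else 0) * g k n) = -1"
    unfolding Inl_eq_mdiag mmul_mdiag_right by (simp add: mmul_def mdiag_def mstar_def)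
  then have "qRe (\<Sum>k<n+1. qcnj (g k n) * (if k < n then 1 else if k = n then -1 else 0) * g k n) = -1"
    by (simp add: uminus_quat_def one_quat_def)
  then show ?thesis
    by (simp add: qRe_sum qRe_diff qRe_qcnj_mult_self)
qed

lemma Sp_last_column_qim_ne_0:
  assumes "g \<in> Sp n"
  shows "qim (\<Sum>i<n+1. g i n * qi * (inv\<^bsub>Sp_group n\<^esub> g) n i) \<noteq> 0"
proof -
  have "(\<Sum>i<n. g i n * qi * (inv\<^bsub>Sp_group n\<^esub> g) n i) = (\<Sum>i<n. - (g i n * qi * qcnj (g i n)))"
    by (rule sum.cong) (simp_all add: Sp_group_inv_last_row[OF assms])
  then have "(\<Sum>i<n+1. g i n * qi * (inv\<^bsub>Sp_group n\<^esub> g) n i)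
      = g n n * qi * qcnj (g n n) - (\<Sum>i<n. g i n * qi * qcnj (g i n))"
    by (simp add: Sp_group_inv_last_row[OF assms] sum_negf)
  then show ?thesis
    using qim_conj_qi_ne_sum[OF Sp_last_column[OF assms]] by (simp add: qim_diff qim_sum)
qed

theorem proposition4p12:
  fixes n :: nat and G :: "qmat set"
  assumes "n \<ge> 2"
    and "subgroup G (Sp_group n)"
    and "blk n (diag3 1 qi (- qi)) \<in> G"
    and "blk n (diag3 qi 1 (- qi)) \<in> G"
    and "blk n (diag3 qi (- qi) 1) \<in> G"
  shows "\<forall>g \<in> Sp n.
     \<not> (qtrace (n+1) ` {mmul (n+1) (mmul (n+1) g x) (inv\<^bsub>Sp_group n\<^esub> g) | x. x \<in> G}
          \<subseteq> range quat_of_real)"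
proof (intro ballI notI)
  fix g assume g: "g \<in> Sp n"
    and traces_real: "qtrace (n+1) ` {mmul (n+1) (mmul (n+1) g x) (inv\<^bsub>Sp_group n\<^esub> g) | x. x \<in> G}
          \<subseteq> range quat_of_real"
  interpret G: subgroup G "Sp_group n" by (rule assms(2))
  \<comment> \<open>only \<open>1, c_1, c_2, c_1 c_2 \<in> G\<close> are used\<close>
  define T where "T x = qtrace (n+1) (mmul (n+1) (mmul (n+1) g x) (inv\<^bsub>Sp_group n\<^esub> g))" for x
  define S where "S = (\<Sum>i<n+1. g i n * qi * (inv\<^bsub>Sp_group n\<^esub> g) n i)"
  have qim_T: "qim (T x) = 0" if "x \<in> G" for x
    using traces_real that by (force simp: T_def qim_quat_of_real)
  have "blk n (diag3 qi qi (-1)) \<in> G"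
    using G.m_closed[OF assms(3,4)] mmul_blk_diag3[OF assms(1)] by (simp add: Sp_group_def qi_mult_qi)
  moreover have "blk n (diag3 1 1 1) \<in> G"
    using G.one_closed mId_eq_blk_diag3[OF assms(1)] by (simp add: Sp_group_def)
  moreover have combination: "T (blk n (diag3 1 1 1)) + T (blk n (diag3 qi qi (-1)))
      - T (blk n (diag3 1 qi (- qi))) - T (blk n (diag3 qi 1 (- qi))) = S + S"
    unfolding T_def qtrace_conj_blk_diag3_combination[OF assms(1)] S_def
    by (simp add: distrib_left distrib_right sum.distrib)
  ultimately have "qim (S + S) = 0"
    using qim_T assms(3,4) by (simp add: qim_add qim_diff flip: combination)
  then have "qim S = 0"
    by (simp add: qim_add flip: scaleR_2)
  with Sp_last_column_qim_ne_0[OF g] show False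
    by (simp add: S_def)
qed

end
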